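(* A maximal product two-action game with $m$ players has exactly $\frac12\bigl(V(m)+!m\bigr)$ Nash equilibria, where $V(m)=\sum_{l=0}^m\binom{m}{l}2^l\cdot!(m-l)$.
   Context: Fix an integer $m\ge 1$ and $\mathcal A=\{1,\dots,m\}$. A two-action game is a finite game in normal form with player set $\mathcal A$ in which each player $i$ has exactly two pure strategies $s^i_0,s^i_1$, together with utility functions $U^i:S\to\mathbb R$, where $S=\prod_{i\in\mathcal A}\{s^i_0,s^i_1\}$. A mixed strategy combination is identified with $\underline\gamma=(\gamma^1,\dots,\gamma^m)\in[0,1]^m$, where $\gamma^i$ is the probability with which player $i$ plays $s^i_1$. The expected utility $V^i$ is the multilinear extension $V^i(\underline\gamma)=\sum_{(j_1,\dots,j_m)\in\{0,1\}^m}\prod_{k=1}^m p_k(j_k)\,U^i(s^1_{j_1},\dots,s^m_{j_m})$ with $p_k(1)=\gamma^k$, $p_k(0)=1-\gamma^k$. Write $\underline\gamma^{-i}=(\gamma^j)_{j\ne i}$ and $\lambda^i(\underline\gamma^{-i}):=V^i(\underline\gamma)|_{\gamma^i=1}-V^i(\underline\gamma)|_{\gamma^i=0}$. A Nash equilibrium is a point $\underline\gamma\in[0,1]^m$ such that for every $i$: $\lambda^i(\underline\gamma^{-i})=0$ if $0<\gamma^i<1$; $\lambda^i(\underline\gamma^{-i})\le 0$ if $\gamma^i=0$; $\lambda^i(\underline\gamma^{-i})\ge 0$ if $\gamma^i=1$. For $\underline\gamma$ put $L(\underline\gamma)=\{i:\gamma^i\in\{0,1\}\}$. A two-action game is a product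 two-action game if there exist $\underline v=(v_1,\dots,v_m)\in\{0,1\}^m$ and numbers $a^i_j\in(0,1)$ for $i,j\in\mathcal A$, $i\ne j$, with $a^{i_1}_j\neq a^{i_2}_j$ whenever $i_1\neq i_2$ and both differ from $j$, such that $\lambda^i(\underline\gamma^{-i})=(-1)^{v_i}\prod_{j\in\mathcal A\setminus\{i\}}(\gamma^j-a^i_j)$ for every $i\in\mathcal A$. For $\pi\in S_m$, $F(\pi)=\{i:\pi(i)=i\}$; $\mathrm{Der}_m=\{\pi\in S_m: F(\pi)=\emptyset\}$; $!n$ is the number of derangements of an $n$-element set ($!0=1$). $EC(\pi):=\{\underline\gamma\in[0,1]^m \mid L(\underline\gamma)=F(\pi),\ \gamma^j=a^{\pi(j)}_j \text{ for all } j\notin F(\pi)\}$. A product two-action game is maximal if for every $\pi\in S_m\setminus\mathrm{Der}_m$ exactly half of the elements of $EC(\pi)$ are Nash equilibria. *)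

theory Defs
  imports Complex_Main "HOL-Library.FuncSet" "HOL-Combinatorics.Permutations"
begin

text \<open>Pure strategy s^i_j is identified with j in {0,1};
 a pure profile is an element of {1..m} ->E {0,1}.\<close>

definition players :: "nat \<Rightarrow> nat set" where
  "players m = {1..m}"

definition pure_profiles :: "nat \<Rightarrow> (nat \<Rightarrow> nat) set" where
  "pure_profiles m = players m \<rightarrow>\<^sub>E {0, 1}"

definition mixed_profiles :: "nat \<Rightarrow> (nat \<Rightarrow> real) set" where
  "mixed_profiles m = players m \<rightarrow>\<^sub>E {0..1}"

definition exp_util :: "nat \<Rightarrow> (nat \<Rightarrow> (nat \<Rightarrow> nat) \<Rightarrow> real) \<Rightarrow> nat \<Rightarrow> (nat \<Rightarrow> real) \<Rightarrow> real" where
  "exp_util m U i \<gamma> =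
     (\<Sum>s\<in>pure_profiles m. (\<Prod>k\<in>players m. (if s k = 1 then \<gamma> k else 1 - \<gamma> k)) * U i s)"

definition lam :: "nat \<Rightarrow> (nat \<Rightarrow> (nat \<Rightarrow> nat) \<Rightarrow> real) \<Rightarrow> nat \<Rightarrow> (nat \<Rightarrow> real) \<Rightarrow> real" where
  "lam m U i \<gamma> = exp_util m U i (\<gamma>(i := 1)) - exp_util m U i (\<gamma>(i := 0))"

definition nash :: "nat \<Rightarrow> (nat \<Rightarrow> (nat \<Rightarrow> nat) \<Rightarrow> real) \<Rightarrow> (nat \<Rightarrow> real) \<Rightarrow> bool" where
  "nash m U \<gamma> \<longleftrightarrow> \<gamma> \<in> mixed_profiles m \<and>
     (\<forall>i\<in>players m.
        (0 < \<gamma> i \<and> \<gamma> i < 1 \<longrightarrow> lam m U i \<gamma> = 0) \<and>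
        (\<gamma> i = 0 \<longrightarrow> lam m U i \<gamma> \<le> 0) \<and>
        (\<gamma> i = 1 \<longrightarrow> lam m U i \<gamma> \<ge> 0))"

definition Lset :: "nat \<Rightarrow> (nat \<Rightarrow> real) \<Rightarrow> nat set" where
  "Lset m \<gamma> = {i \<in> players m. \<gamma> i \<in> {0, 1}}"

definition is_product_game ::
  "nat \<Rightarrow> (nat \<Rightarrow> (nat \<Rightarrow> nat) \<Rightarrow> real) \<Rightarrow> (nat \<Rightarrow> nat) \<Rightarrow> (nat \<Rightarrow> nat \<Rightarrow> real) \<Rightarrow> bool" where
  "is_product_game m U v a \<longleftrightarrow>
     (\<forall>i\<in>players m. v i \<in> {0, 1}) \<and>
     (\<forall>i\<in>players m. \<forall>j\<in>players m. i \<noteq> j \<longrightarrow> 0 < a i j \<and> a i j < 1) \<and>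
     (\<forall>j\<in>players m. \<forall>i1\<in>players m. \<forall>i2\<in>players m.
        i1 \<noteq> i2 \<and> i1 \<noteq> j \<and> i2 \<noteq> j \<longrightarrow> a i1 j \<noteq> a i2 j) \<and>
     (\<forall>i\<in>players m. \<forall>\<gamma>\<in>mixed_profiles m.
        lam m U i \<gamma> = (-1) ^ (v i) * (\<Prod>j\<in>players m - {i}. (\<gamma> j - a i j)))"

definition product_game :: "nat \<Rightarrow> (nat \<Rightarrow> (nat \<Rightarrow> nat) \<Rightarrow> real) \<Rightarrow> bool" where
  "product_game m U \<longleftrightarrow> (\<exists>v a. is_product_game m U v a)"

definition fixpts :: "nat \<Rightarrow> (nat \<Rightarrow> nat) \<Rightarrow> nat set" where
  "fixpts m \<pi> = {i \<in> players m. \<pi> i = i}"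

definition EC :: "nat \<Rightarrow> (nat \<Rightarrow> nat \<Rightarrow> real) \<Rightarrow> (nat \<Rightarrow> nat) \<Rightarrow> (nat \<Rightarrow> real) set" where
  "EC m a \<pi> = {\<gamma> \<in> mixed_profiles m. Lset m \<gamma> = fixpts m \<pi> \<and>
       (\<forall>j\<in>players m - fixpts m \<pi>. \<gamma> j = a (\<pi> j) j)}"

definition maximal_product_game :: "nat \<Rightarrow> (nat \<Rightarrow> (nat \<Rightarrow> nat) \<Rightarrow> real) \<Rightarrow> bool" where
  "maximal_product_game m U \<longleftrightarrow> (\<exists>v a. is_product_game m U v a \<and>
     (\<forall>\<pi>. \<pi> permutes players m \<and> fixpts m \<pi> \<noteq> {} \<longrightarrow>
        2 * card {\<gamma> \<in> EC m a \<pi>. nash m U \<gamma>} = card (EC m a \<pi>)))"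

definition subfact :: "nat \<Rightarrow> nat" where
  "subfact n = card {\<pi>. \<pi> permutes {1..n} \<and> (\<forall>i\<in>{1..n}. \<pi> i \<noteq> i)}"

definition Vcount :: "nat \<Rightarrow> nat" where
  "Vcount m = (\<Sum>l=0..m. (m choose l) * 2 ^ l * subfact (m - l))"

end

theory Submission
  imports Defs
begin

text \<open>
  In a product game, an interior coordinate \<open>\<gamma> i\<close> of an equilibrium forces \<open>\<lambda>\<^sup>i = 0\<close>, i.e.
  \<open>\<gamma> j = a\<^sup>i\<^sub>j\<close> for some \<open>j \<noteq> i\<close>; since the \<open>a\<^sup>i\<^sub>j\<close> (for fixed \<open>j\<close>) are distinct and lie in
  \<open>(0,1)\<close>, the inverse of \<open>i \<mapsto> j\<close> is a permutation \<open>\<pi>\<close> of the interior players with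
  \<open>\<gamma> \<in> EC(\<pi>)\<close>. So the equilibria are partitioned by the sets \<open>EC(\<pi>)\<close>, which have
  \<open>2^|F(\<pi>)|\<close> elements. For a derangement the unique point of \<open>EC(\<pi>)\<close> is an equilibrium,
  otherwise by maximality half of \<open>EC(\<pi>)\<close> are; and grouping the permutations by their
  fixed-point sets gives \<open>\<Sum>\<^sub>\<pi> 2^|F(\<pi>)| = V(m)\<close>.
\<close>

lemma finite_players [simp]: "finite (players m)"
  by (simp add: players_def)

lemma card_players [simp]: "card (players m) = m"
  by (simp add: players_def)

lemma fixpts_subset_players: "fixpts m \<pi> \<subseteq> players m"
  by (auto simp: fixpts_def)

lemma card_derangements:
  assumes "finite T"
  shows "card {\<pi>. \<pi> permutes T \<and> (\<forall>x\<in>T. \<pi> x \<noteq> x)} = subfact (card T)"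
proof -
  obtain f where "bij_betw f {1..card T} T"
    using ex_bij_betw_nat_finite_1[OF assms] by blast
  from bij_betw_same_card[OF bij_betw_derangements[OF this]] show ?thesis
    unfolding subfact_def by simp
qed

lemma permutes_fixpts_eq_iff:
  assumes "S \<subseteq> players m"
  shows "\<pi> permutes players m \<and> fixpts m \<pi> = S \<longleftrightarrow>
         \<pi> permutes (players m - S) \<and> (\<forall>x\<in>players m - S. \<pi> x \<noteq> x)"
proof
  assume "\<pi> permutes players m \<and> fixpts m \<pi> = S"
  then show "\<pi> permutes (players m - S) \<and> (\<forall>x\<in>players m - S. \<pi> x \<noteq> x)"
    by (auto simp: fixpts_def intro: permutes_superset)
next
  assume *: "\<pi> permutes (players m - S) \<and> (\<forall>x\<in>players m - S. \<pi> x \<noteq> x)"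
  then have "\<pi> permutes players m"
    by (auto intro: permutes_subset)
  with * assms show "\<pi> permutes players m \<and> fixpts m \<pi> = S"
    by (auto simp: fixpts_def dest: permutes_not_in)
qed

lemma card_permutes_fixpts_eq:
  assumes "S \<subseteq> players m"
  shows "card {\<pi>. \<pi> permutes players m \<and> fixpts m \<pi> = S} = subfact (m - card S)"
  using card_derangements[of "players m - S"] assms
  by (simp add: permutes_fixpts_eq_iff card_Diff_subset finite_subset)

lemma card_permutes_card_fixpts_eq:
  "card {\<pi>. \<pi> permutes players m \<and> card (fixpts m \<pi>) = l} = (m choose l) * subfact (m - l)"
proof -
  let ?\<S> = "{S. S \<subseteq> players m \<and> card S = l}"
  have "{\<pi>. \<pi> permutes players m \<and> card (fixpts m \<pi>) = l} =
        (\<Union>S\<in>?\<S>. {\<pi>. \<pi> permutes players m \<and> fixpts m \<pi> = S})"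
    using fixpts_subset_players by blast
  also have "card \<dots> = (\<Sum>S\<in>?\<S>. card {\<pi>. \<pi> permutes players m \<and> fixpts m \<pi> = S})"
    by (rule card_UN_disjoint) (auto intro: finite_subset[OF _ finite_permutations])
  also have "\<dots> = (\<Sum>S\<in>?\<S>. subfact (m - l))"
    by (rule sum.cong) (simp_all add: card_permutes_fixpts_eq)
  also have "\<dots> = (m choose l) * subfact (m - l)"
    using n_subsets[of "players m" l] by simp
  finally show ?thesis .
qed

lemma sum_pow2_card_fixpts:
  "(\<Sum>\<pi> | \<pi> permutes players m. (2::nat) ^ card (fixpts m \<pi>)) = Vcount m"
proof -
  let ?P = "{\<pi>. \<pi> permutes players m}"
  have "(\<Sum>\<pi>\<in>?P. (2::nat) ^ card (fixpts m \<pi>)) =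
        (\<Sum>l=0..m. \<Sum>\<pi>\<in>{\<pi>\<in>?P. card (fixpts m \<pi>) = l}. 2 ^ card (fixpts m \<pi>))"
    by (rule sum.group[symmetric])
      (auto simp: finite_permutations intro!: card_mono[of "players m", simplified] fixpts_subset_players)
  also have "\<dots> = (\<Sum>l=0..m. 2 ^ l * card {\<pi>. \<pi> permutes players m \<and> card (fixpts m \<pi>) = l})"
    by (rule sum.cong) auto
  also have "\<dots> = Vcount m"
    by (simp add: Vcount_def card_permutes_card_fixpts_eq mult_ac)
  finally show ?thesis .
qed

lemma product_game_param_bounds:
  assumes "is_product_game m U v a" "i \<in> players m" "j \<in> players m" "i \<noteq> j"
  shows "0 < a i j" "a i j < 1"
  using assms unfolding is_product_game_def by blast+

lemma product_game_param_inj: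
  assumes "is_product_game m U v a" "a i1 j = a i2 j"
    "i1 \<in> players m" "i2 \<in> players m" "j \<in> players m" "i1 \<noteq> j" "i2 \<noteq> j"
  shows "i1 = i2"
  using assms unfolding is_product_game_def by metis

lemma lam_eq_0_iff:
  assumes "is_product_game m U v a" "\<gamma> \<in> mixed_profiles m" "i \<in> players m"
  shows "lam m U i \<gamma> = 0 \<longleftrightarrow> (\<exists>j\<in>players m - {i}. \<gamma> j = a i j)"
proof -
  have "lam m U i \<gamma> = (-1) ^ (v i) * (\<Prod>j\<in>players m - {i}. (\<gamma> j - a i j))"
    using assms unfolding is_product_game_def by blast
  then show ?thesis by simp
qed

lemma EC_eq_PiE:
  assumes pg: "is_product_game m U v a" and \<pi>: "\<pi> permutes players m"
  shows "EC m a \<pi> = (\<Pi>\<^sub>E j\<in>players m. if j \<in> fixpts m \<pi> then {0, 1} else {a (\<pi> j) j})"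
    (is "_ = (\<Pi>\<^sub>E j\<in>_. ?T j)")
proof -
  have interior: "0 < a (\<pi> j) j \<and> a (\<pi> j) j < 1" if "j \<in> players m" "j \<notin> fixpts m \<pi>" for j
    using that product_game_param_bounds[OF pg] permutes_in_image[OF \<pi>]
    by (auto simp: fixpts_def)
  have pointwise: "(x \<in> {0..1} \<and> (x \<in> {0, 1} \<longleftrightarrow> j \<in> fixpts m \<pi>) \<and>
                    (j \<notin> fixpts m \<pi> \<longrightarrow> x = a (\<pi> j) j)) \<longleftrightarrow> x \<in> ?T j"
    if "j \<in> players m" for j and x :: real
    using interior[OF that] by auto
  have Lset_iff: "Lset m \<gamma> = fixpts m \<pi> \<longleftrightarrow>
                  (\<forall>j\<in>players m. \<gamma> j \<in> {0, 1} \<longleftrightarrow> j \<in> fixpts m \<pi>)" for \<gamma>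
    using fixpts_subset_players[of m \<pi>] unfolding Lset_def by blast
  show ?thesis
  proof (intro set_eqI)
    fix \<gamma>
    show "\<gamma> \<in> EC m a \<pi> \<longleftrightarrow> \<gamma> \<in> (\<Pi>\<^sub>E j\<in>players m. ?T j)"
      unfolding EC_def mixed_profiles_def mem_Collect_eq Lset_iff PiE_iff
      using pointwise[of _ "\<gamma> _"] by blast
  qed
qed

lemma card_EC:
  assumes "is_product_game m U v a" "\<pi> permutes players m"
  shows "finite (EC m a \<pi>)" "card (EC m a \<pi>) = 2 ^ card (fixpts m \<pi>)"
proof -
  have "(\<Prod>j\<in>players m. card (if j \<in> fixpts m \<pi> then {0, 1::real} else {a (\<pi> j) j}))
        = (\<Prod>j\<in>players m. if j \<in> fixpts m \<pi> then 2 else 1)"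
    by (rule prod.cong) auto
  also have "\<dots> = 2 ^ card (fixpts m \<pi>)"
    using fixpts_subset_players[of m \<pi>] by (simp add: prod.If_cases Int_absorb1)
  finally show "card (EC m a \<pi>) = 2 ^ card (fixpts m \<pi>)"
    by (simp add: EC_eq_PiE[OF assms] card_PiE)
  show "finite (EC m a \<pi>)"
    by (simp add: EC_eq_PiE[OF assms] finite_PiE)
qed

lemma permutes_mem_EC_unique:
  assumes pg: "is_product_game m U v a"
    and \<pi>1: "\<pi>1 permutes players m" and \<pi>2: "\<pi>2 permutes players m"
    and "\<gamma> \<in> EC m a \<pi>1" "\<gamma> \<in> EC m a \<pi>2"
  shows "\<pi>1 = \<pi>2"
proof
  fix j
  have F: "fixpts m \<pi>1 = fixpts m \<pi>2"
    using assms(4,5) by (simp add: EC_def)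
  consider "j \<notin> players m" | "j \<in> fixpts m \<pi>1" | "j \<in> players m - fixpts m \<pi>1"
    by blast
  then show "\<pi>1 j = \<pi>2 j"
  proof cases
    case 1
    then show ?thesis using \<pi>1 \<pi>2 by (simp add: permutes_not_in)
  next
    case 2
    moreover from this have "j \<in> fixpts m \<pi>2"
      using F by simp
    ultimately show ?thesis
      by (simp add: fixpts_def)
  next
    case 3
    then have "a (\<pi>1 j) j = a (\<pi>2 j) j"
      using assms(4,5) F by (auto simp: EC_def)
    with 3 F show ?thesis
      by (intro product_game_param_inj[OF pg])
        (auto simp: fixpts_def permutes_in_image[OF \<pi>1] permutes_in_image[OF \<pi>2])
  qed
qed

lemma EC_derangement_nash:
  assumes pg: "is_product_game m U v a" and \<pi>: "\<pi> permutes players m"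
    and no_fix: "fixpts m \<pi> = {}" and \<gamma>: "\<gamma> \<in> EC m a \<pi>"
  shows "nash m U \<gamma>"
proof -
  have mixed: "\<gamma> \<in> mixed_profiles m" and interior: "Lset m \<gamma> = {}"
    and on_a: "\<forall>j\<in>players m. \<gamma> j = a (\<pi> j) j"
    using \<gamma> no_fix by (auto simp: EC_def)
  have "lam m U i \<gamma> = 0" if i: "i \<in> players m" for i
  proof -
    let ?j = "inv \<pi> i"
    have "?j \<in> players m" "\<pi> ?j = i"
      using \<pi> i by (simp_all add: permutes_inv permutes_in_image permutes_inverses(1))
    moreover from this have "?j \<noteq> i"
      using no_fix by (auto simp: fixpts_def)
    ultimately show ?thesis
      using lam_eq_0_iff[OF pg mixed i] on_a by force
  qed
  then show ?thesis
    using mixed interior by (auto simp: nash_def Lset_def)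
qed

lemma permutes_right_inverse_of_inj_on:
  assumes "finite I" "\<sigma> ` I \<subseteq> I" "inj_on \<sigma> I"
  obtains \<pi> where "\<pi> permutes I" "\<forall>j\<in>I. \<sigma> (\<pi> j) = j"
proof
  have bij: "bij_betw \<sigma> I I"
    using assms by (simp add: bij_betw_def endo_inj_surj)
  let ?\<pi> = "\<lambda>j. if j \<in> I then inv_into I \<sigma> j else j"
  have "bij_betw ?\<pi> I I"
    using bij_betw_inv_into[OF bij] by (rule bij_betw_cong[THEN iffD1, rotated]) simp
  then show "?\<pi> permutes I"
    by (rule bij_imp_permutes) simp
  show "\<forall>j\<in>I. \<sigma> (?\<pi> j) = j"
    using bij by (simp add: bij_betw_imp_surj_on f_inv_into_f)
qed

lemma nash_mem_EC:
  assumes pg: "is_product_game m U v a" and nash: "nash m U \<gamma>"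
  obtains \<pi> where "\<pi> permutes players m" "\<gamma> \<in> EC m a \<pi>"
proof -
  let ?P = "players m"
  define I where "I = ?P - Lset m \<gamma>"
  have mixed: "\<gamma> \<in> mixed_profiles m"
    using nash by (simp add: nash_def)
  have "\<exists>j\<in>?P - {i}. \<gamma> j = a i j" if "i \<in> I" for i
  proof -
    have "0 \<le> \<gamma> i" "\<gamma> i \<le> 1"
      using mixed that by (auto simp: mixed_profiles_def PiE_iff I_def)
    with that nash have "lam m U i \<gamma> = 0"
      by (auto simp: nash_def I_def Lset_def)
    with that show ?thesis
      using lam_eq_0_iff[OF pg mixed] by (simp add: I_def)
  qed
  then obtain \<sigma> where \<sigma>: "\<forall>i\<in>I. \<sigma> i \<in> ?P - {i} \<and> \<gamma> (\<sigma> i) = a i (\<sigma> i)"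
    by metis
  have "\<sigma> ` I \<subseteq> I"
    using \<sigma> product_game_param_bounds[OF pg] by (fastforce simp: I_def Lset_def)
  moreover have "inj_on \<sigma> I"
  proof (rule inj_onI)
    fix i1 i2
    assume i: "i1 \<in> I" "i2 \<in> I" and eq: "\<sigma> i1 = \<sigma> i2"
    have "\<sigma> i1 \<in> ?P - {i1}" "\<gamma> (\<sigma> i1) = a i1 (\<sigma> i1)"
      "\<sigma> i2 \<in> ?P - {i2}" "\<gamma> (\<sigma> i2) = a i2 (\<sigma> i2)"
      using \<sigma> i by simp_all
    with eq have "\<sigma> i1 \<in> ?P - {i1, i2}" "a i1 (\<sigma> i1) = a i2 (\<sigma> i1)"
      by auto
    with i show "i1 = i2"
      by (intro product_game_param_inj[OF pg]) (auto simp: I_def)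
  qed
  ultimately obtain \<pi> where \<pi>: "\<pi> permutes I" and \<sigma>\<pi>: "\<forall>j\<in>I. \<sigma> (\<pi> j) = j"
    using permutes_right_inverse_of_inj_on[of I \<sigma>] by (auto simp: I_def)
  have \<pi>P: "\<pi> permutes ?P"
    using \<pi> by (rule permutes_subset) (auto simp: I_def)
  have moved: "\<pi> j \<in> I \<and> \<pi> j \<noteq> j \<and> \<gamma> j = a (\<pi> j) j" if j: "j \<in> I" for j
  proof -
    have "\<pi> j \<in> I"
      using j by (simp add: permutes_in_image[OF \<pi>])
    with \<sigma> have "\<sigma> (\<pi> j) \<in> ?P - {\<pi> j}" "\<gamma> (\<sigma> (\<pi> j)) = a (\<pi> j) (\<sigma> (\<pi> j))"
      by simp_all
    with \<open>\<pi> j \<in> I\<close> \<sigma>\<pi> j show ?thesis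
      by auto
  qed
  have "fixpts m \<pi> = Lset m \<gamma>"
    using moved permutes_not_in[OF \<pi>] by (auto simp: fixpts_def I_def Lset_def)
  moreover have "\<forall>j\<in>?P - fixpts m \<pi>. \<gamma> j = a (\<pi> j) j"
    using moved calculation by (simp add: I_def)
  ultimately show thesis
    using that[OF \<pi>P] mixed by (simp add: EC_def)
qed

lemma card_nash_eq_sum_EC:
  assumes pg: "is_product_game m U v a"
  shows "finite {\<gamma>. nash m U \<gamma>}"
    "card {\<gamma>. nash m U \<gamma>} = (\<Sum>\<pi> | \<pi> permutes players m. card {\<gamma> \<in> EC m a \<pi>. nash m U \<gamma>})"
proof -
  let ?Perms = "{\<pi>. \<pi> permutes players m}"
  have nash_UN: "{\<gamma>. nash m U \<gamma>} = (\<Union>\<pi>\<in>?Perms. {\<gamma> \<in> EC m a \<pi>. nash m U \<gamma>})"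
    using nash_mem_EC[OF pg] by blast
  have fin: "finite ?Perms" "\<forall>\<pi>\<in>?Perms. finite {\<gamma> \<in> EC m a \<pi>. nash m U \<gamma>}"
    using card_EC(1)[OF pg] by (simp_all add: finite_permutations)
  then show "finite {\<gamma>. nash m U \<gamma>}"
    unfolding nash_UN by blast
  show "card {\<gamma>. nash m U \<gamma>} = (\<Sum>\<pi>\<in>?Perms. card {\<gamma> \<in> EC m a \<pi>. nash m U \<gamma>})"
    unfolding nash_UN using fin permutes_mem_EC_unique[OF pg]
    by (intro card_UN_disjoint) blast+
qed

theorem corollary4p5:
  fixes m :: nat and U :: "nat \<Rightarrow> (nat \<Rightarrow> nat) \<Rightarrow> real"
  assumes "m \<ge> 1"
    and "maximal_product_game m U"
  shows "finite {\<gamma>. nash m U \<gamma>} \<and>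
         real (card {\<gamma>. nash m U \<gamma>}) = (real (Vcount m) + real (subfact m)) / 2"
proof -
  obtain v a where pg: "is_product_game m U v a" and maximal:
    "\<And>\<pi>. \<pi> permutes players m \<Longrightarrow> fixpts m \<pi> \<noteq> {} \<Longrightarrow>
        2 * card {\<gamma> \<in> EC m a \<pi>. nash m U \<gamma>} = card (EC m a \<pi>)"
    using assms(2) unfolding maximal_product_game_def by blast
  let ?Perms = "{\<pi>. \<pi> permutes players m}"
  have per_perm: "2 * card {\<gamma> \<in> EC m a \<pi>. nash m U \<gamma>} =
                  2 ^ card (fixpts m \<pi>) + (if fixpts m \<pi> = {} then 1 else 0)"
    if "\<pi> \<in> ?Perms" for \<pi>
    using that maximal card_EC(2)[OF pg] EC_derangement_nash[OF pg]
    by (cases "fixpts m \<pi> = {}") (simp_all add: Collect_conj_eq Int_absorb2 subsetI)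
  have "2 * card {\<gamma>. nash m U \<gamma>} =
        (\<Sum>\<pi>\<in>?Perms. 2 ^ card (fixpts m \<pi>)) + card {\<pi> \<in> ?Perms. fixpts m \<pi> = {}}"
    by (simp add: card_nash_eq_sum_EC(2)[OF pg] sum_distrib_left per_perm sum.distrib
        finite_permutations flip: sum.inter_filter)
  also have "\<dots> = Vcount m + subfact m"
    using card_permutes_fixpts_eq[of "{}" m] by (simp add: sum_pow2_card_fixpts)
  finally have "real (2 * card {\<gamma>. nash m U \<gamma>}) = real (Vcount m + subfact m)"
    by (rule arg_cong)
  then show ?thesis
    using card_nash_eq_sum_EC(1)[OF pg] by simp
qed

end
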